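(* Let $p>2$ be an integer, $\theta\in(0,1)$, $\eta\ge0$, $\bm D_0\in\mathbb O(n)$, let $\bm X\in\mathbb R^{n\times r}$ have i.i.d. $\mathcal{BG}(\theta)$ entries, $\bm G\in\mathbb R^{n\times r}$ i.i.d. $\mathcal N(0,\eta^2)$ entries independent of $\bm X$, and $\bm Y_N=\bm D_0\bm X+\bm G$. Then the global maximizers of $\bm A\mapsto\mathbb E_{\bm X,\bm G}\|\bm A\bm Y_N\|_p^p$ over $\bm A\in\mathbb O(n)$ are exactly the matrices $\bm A$ with $\bm A^*=\bm D_0\bm\Pi$, $\bm\Pi\in\mathrm{SP}(n)$.
   Context: $\mathcal{BG}(\theta)$ is the law of $b\cdot g$ with $b\sim\mathrm{Ber}(\theta)$, $g\sim\mathcal N(0,1)$ independent. $\mathbb O(n)$: real orthogonal $n\times n$ matrices; $\mathrm{SP}(n)$: signed permutation matrices; $\|\bm M\|_p^p=\sum_{i,j}|M_{ij}|^p$; $\bm A^*$ the transpose. *)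

theory Defs
  imports "HOL-Analysis.Analysis" "HOL-Probability.Probability"
begin

definition std_normal :: "real measure" where
  "std_normal = density lborel std_normal_density"

definition BG :: "real \<Rightarrow> real measure" where
  "BG \<theta> = distr (measure_pmf (bernoulli_pmf \<theta>) \<Otimes>\<^sub>M std_normal) borel
              (\<lambda>(b, g). (if b then 1 else 0) * g)"

text \<open>Gaussian law N(0, eta^2) (eta >= 0), as the law of eta*g with g ~ N(0,1);
  for eta = 0 this is the point mass at 0.\<close>
definition gauss :: "real \<Rightarrow> real measure" where
  "gauss \<eta> = distr std_normal borel (\<lambda>z. \<eta> * z)"

definition mat_of :: "('n::finite \<times> 'r::finite \<Rightarrow> real) \<Rightarrow> real^'r^'n" where
  "mat_of X = (\<chi> i j. X (i, j))"

definition pnorm_pow :: "nat \<Rightarrow> real^'r::finite^'n::finite \<Rightarrow> real" where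
  "pnorm_pow p M = (\<Sum>i\<in>UNIV. \<Sum>j\<in>UNIV. \<bar>M $ i $ j\<bar> ^ p)"

definition objective ::
  "nat \<Rightarrow> real \<Rightarrow> real \<Rightarrow> real^'n::finite^'n \<Rightarrow> 'r::finite itself \<Rightarrow> real^'n^'n \<Rightarrow> real" where
  "objective p \<theta> \<eta> D0 (_ :: 'r itself) A =
     (\<integral>XG. pnorm_pow p (A ** (D0 ** mat_of (fst XG) + mat_of (snd XG) :: real^'r^'n))
        \<partial>(PiM (UNIV :: ('n \<times> 'r) set) (\<lambda>_. BG \<theta>) \<Otimes>\<^sub>M PiM (UNIV :: ('n \<times> 'r) set) (\<lambda>_. gauss \<eta>)))"

definition signed_perm_matrix :: "real^'n::finite^'n \<Rightarrow> bool" where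
  "signed_perm_matrix P \<longleftrightarrow>
     (\<exists>\<sigma> s. \<sigma> permutes (UNIV :: 'n set) \<and> (\<forall>i. s i = 1 \<or> s i = -1) \<and>
            P = (\<chi> i j. if j = \<sigma> i then s i else 0))"

end

theory Submission
  imports Defs
begin

text \<open>Put \<open>W = A D0\<close>, which is orthogonal, and write each signal entry as \<open>b g\<close> with independent
  \<open>b ~ Ber(\<theta>)\<close> and \<open>g ~ N(0,1)\<close>. Given the Bernoulli mask, the entry \<open>(A Y_N)_ij\<close> is centred
  Gaussian with variance \<open>\<Sum>_l W_il\<^sup>2 b_lj + \<eta>\<^sup>2\<close>, so its \<open>p\<close>-th absolute moment is
  \<open>m_p (\<Sum>_l W_il\<^sup>2 b_lj + \<eta>\<^sup>2)\<^sup>p\<^sup>/\<^sup>2\<close>. The weights \<open>W_il\<^sup>2\<close> sum to \<open>1\<close> and \<open>t \<mapsto> (t + \<eta>\<^sup>2)\<^sup>p\<^sup>/\<^sup>2\<close>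
  is strictly convex for \<open>p > 2\<close>, so Jensen bounds the expectation over the mask by
  \<open>\<theta> m_p (1 + \<eta>\<^sup>2)\<^sup>p\<^sup>/\<^sup>2 + (1 - \<theta>) m_p |\<eta>|\<^sup>p\<close>, with equality iff row \<open>i\<close> of \<open>W\<close> is a signed unit
  vector. Hence the objective is at most \<open>n r\<close> times this value, with equality exactly when
  \<open>W\<^sup>*\<close> is a signed permutation, i.e. \<open>A\<^sup>* = D0 \<Pi>\<close>; \<open>A = D0\<^sup>*\<close> attains the bound.\<close>

section \<open>Independence of coordinate blocks in product measures\<close>

lemma indep_vars_PiM_components:
  fixes N :: "'k \<Rightarrow> 'a measure"
  assumes N: "\<And>k. k \<in> J \<Longrightarrow> prob_space (N k)" and "J \<noteq> {}"
  shows "prob_space.indep_vars (PiM J N) N (\<lambda>k \<omega>. \<omega> k) J"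
proof -
  interpret prob_space "PiM J N" by (intro prob_space_PiM N)
  have "distr (PiM J N) (PiM J N) (\<lambda>\<omega>. \<lambda>k\<in>J. \<omega> k) = distr (PiM J N) (PiM J N) (\<lambda>\<omega>. \<omega>)"
    by (intro distr_cong) (auto simp: space_PiM PiE_def extensional_def)
  moreover have "PiM J (\<lambda>k. distr (PiM J N) (N k) (\<lambda>\<omega>. \<omega> k)) = PiM J N"
    by (intro PiM_cong refl distr_PiM_component N) auto
  ultimately show ?thesis
    by (subst indep_vars_iff_distr_eq_PiM') (auto simp: \<open>J \<noteq> {}\<close>)
qed

lemma indep_vars_PiM_blocks:
  fixes N :: "'k \<Rightarrow> 'a measure"
  assumes N: "\<And>k. prob_space (N k)" and disj: "disjoint_family_on K L"
    and f: "\<And>l. l \<in> L \<Longrightarrow> f l \<in> measurable (PiM (K l) N) (M' l)"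
  shows "prob_space.indep_vars (PiM UNIV N) M' (\<lambda>l \<omega>. f l (restrict \<omega> (K l))) L"
proof -
  interpret prob_space "PiM UNIV N" by (intro prob_space_PiM N)
  have "indep_vars (\<lambda>l. PiM (K l) N) (\<lambda>l \<omega>. restrict (\<lambda>k. \<omega> k) (K l)) L"
    by (rule indep_vars_restrict[OF indep_vars_PiM_components[OF N]]) (use disj in auto)
  from indep_vars_compose2[OF this f] show ?thesis by simp
qed

lemma indep_var_PiM_blocks:
  fixes N :: "'k \<Rightarrow> 'a measure"
  assumes N: "\<And>k. prob_space (N k)" and "A \<inter> B = {}"
    and f: "f \<in> measurable (PiM A N) S" and g: "g \<in> measurable (PiM B N) T"
  shows "prob_space.indep_var (PiM UNIV N) S (\<lambda>\<omega>. f (restrict \<omega> A)) T (\<lambda>\<omega>. g (restrict \<omega> B))"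
proof -
  interpret prob_space "PiM UNIV N" by (intro prob_space_PiM N)
  have "indep_var (PiM A N) (\<lambda>\<omega>. restrict (\<lambda>k. \<omega> k) A) (PiM B N) (\<lambda>\<omega>. restrict (\<lambda>k. \<omega> k) B)"
    by (rule indep_var_restrict[OF indep_vars_PiM_components[OF N]]) (use \<open>A \<inter> B = {}\<close> in auto)
  from indep_var_compose[OF this f g] show ?thesis by (simp add: comp_def)
qed

lemma distr_PiM_two_components:
  fixes N :: "'k \<Rightarrow> 'a measure"
  assumes N: "\<And>k. prob_space (N k)" and "a \<noteq> b"
  shows "distr (PiM UNIV N) (N a \<Otimes>\<^sub>M N b) (\<lambda>\<omega>. (\<omega> a, \<omega> b)) = N a \<Otimes>\<^sub>M N b"
proof -
  interpret prob_space "PiM UNIV N" by (intro prob_space_PiM N)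
  have "indep_var (N a) (\<lambda>\<omega>. (\<lambda>f. f a) (restrict \<omega> {a})) (N b) (\<lambda>\<omega>. (\<lambda>f. f b) (restrict \<omega> {b}))"
    by (rule indep_var_PiM_blocks[OF N]) (use \<open>a \<noteq> b\<close> in auto)
  then have "indep_var (N a) (\<lambda>\<omega>. \<omega> a) (N b) (\<lambda>\<omega>. \<omega> b)" by simp
  then have "distr (PiM UNIV N) (N a) (\<lambda>\<omega>. \<omega> a) \<Otimes>\<^sub>M distr (PiM UNIV N) (N b) (\<lambda>\<omega>. \<omega> b) =
      distr (PiM UNIV N) (N a \<Otimes>\<^sub>M N b) (\<lambda>\<omega>. (\<omega> a, \<omega> b))"
    by (subst (asm) indep_var_distribution_eq) auto
  moreover have "distr (PiM UNIV N) (N k) (\<lambda>\<omega>. \<omega> k) = N k" for k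
    by (intro distr_PiM_component N) simp
  ultimately show ?thesis by simp
qed

lemma prob_space_std_normal: "prob_space std_normal"
  unfolding std_normal_def by (rule prob_space_normal_density) simp

lemma sets_std_normal [measurable_cong, simp]: "sets std_normal = sets borel"
  unfolding std_normal_def by simp

definition bernoulli_real :: "real \<Rightarrow> real measure" where
  "bernoulli_real \<theta> = distr (measure_pmf (bernoulli_pmf \<theta>)) borel (\<lambda>b. if b then 1 else 0)"

lemma prob_space_bernoulli_real: "prob_space (bernoulli_real \<theta>)"
  unfolding bernoulli_real_def by (intro prob_space.prob_space_distr prob_space_measure_pmf) auto

lemma sets_bernoulli_real [measurable_cong, simp]: "sets (bernoulli_real \<theta>) = sets borel"
  unfolding bernoulli_real_def by simp

lemma AE_bernoulli_real_01: "AE t in bernoulli_real \<theta>. t = 0 \<or> t = 1"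
  unfolding bernoulli_real_def by (subst AE_distr_iff) auto

lemma emeasure_bernoulli_real:
  assumes "0 \<le> \<theta>" "\<theta> \<le> 1"
  shows "emeasure (bernoulli_real \<theta>) {1} = \<theta>" and "emeasure (bernoulli_real \<theta>) {0} = 1 - \<theta>"
proof -
  have "{x. x} = {True}" "{x. \<not> x} = {False}" by auto
  then show "emeasure (bernoulli_real \<theta>) {1} = \<theta>" "emeasure (bernoulli_real \<theta>) {0} = 1 - \<theta>"
    unfolding bernoulli_real_def using assms
    by (subst emeasure_distr; auto simp: vimage_def emeasure_pmf_single)+
qed

lemma nn_integral_bernoulli_real:
  assumes "0 \<le> \<theta>" "\<theta> \<le> 1" and F: "\<And>t. 0 \<le> F t" and [measurable]: "F \<in> borel_measurable borel"
  shows "(\<integral>\<^sup>+t. ennreal (F t) \<partial>bernoulli_real \<theta>) = ennreal (\<theta> * F 1 + (1 - \<theta>) * F 0)"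
proof -
  have "(\<integral>\<^sup>+t. ennreal (F t) \<partial>bernoulli_real \<theta>) =
      (\<integral>\<^sup>+b. ennreal (F (if b then 1 else 0)) \<partial>measure_pmf (bernoulli_pmf \<theta>))"
    unfolding bernoulli_real_def by (subst nn_integral_distr) auto
  also have "\<dots> = ennreal (\<theta> * F 1 + (1 - \<theta>) * F 0)"
    using assms by (simp add: ac_simps ennreal_mult)
  finally show ?thesis .
qed

lemma BG_eq_distr_mult: "BG \<theta> = distr (bernoulli_real \<theta> \<Otimes>\<^sub>M std_normal) borel (\<lambda>(b, g). b * g)"
proof -
  interpret std_normal: prob_space std_normal by (rule prob_space_std_normal)
  have "bernoulli_real \<theta> \<Otimes>\<^sub>M std_normal =
      distr (measure_pmf (bernoulli_pmf \<theta>) \<Otimes>\<^sub>M std_normal) (borel \<Otimes>\<^sub>M std_normal)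
        (\<lambda>(b, g). (if b then 1 else 0, g))"
    unfolding bernoulli_real_def
    using pair_measure_distr[of "\<lambda>b. if b then 1 else (0::real)" "measure_pmf (bernoulli_pmf \<theta>)" borel
        "\<lambda>g. g" std_normal std_normal]
    by (simp add: std_normal.sigma_finite_measure_axioms)
  then show ?thesis
    unfolding BG_def by (simp add: distr_distr comp_def case_prod_unfold)
qed

section \<open>A latent product representation of the data\<close>

text \<open>The coordinates of \<open>latent \<theta>\<close> are a Bernoulli mask (\<open>Inl x\<close>), a Gaussian factor of the
  signal (\<open>Inr (Inl x)\<close>) and a standard Gaussian noise variable (\<open>Inr (Inr x)\<close>), all
  independent; the signal entry is the product of the first two.\<close>

definition latent :: "real \<Rightarrow> 'x + ('x + 'x) \<Rightarrow> real measure" where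
  "latent \<theta> k = (case k of Inl _ \<Rightarrow> bernoulli_real \<theta> | Inr _ \<Rightarrow> std_normal)"

lemma latent_simps [simp]:
  "latent \<theta> (Inl x) = bernoulli_real \<theta>" "latent \<theta> (Inr y) = std_normal"
  by (simp_all add: latent_def)

lemma prob_space_latent: "prob_space (latent \<theta> k)"
  by (cases k) (simp_all add: prob_space_bernoulli_real prob_space_std_normal)

lemma sets_latent [measurable_cong, simp]: "sets (latent \<theta> k) = sets borel"
  by (cases k) simp_all

lemma measurable_latent_component [measurable]:
  "k \<in> A \<Longrightarrow> (\<lambda>\<omega>. \<omega> k) \<in> borel_measurable (PiM A (latent \<theta>))"
  using measurable_component_singleton[of k A "latent \<theta>"] by simp

lemma distr_latent_signal:
  "distr (PiM UNIV (latent \<theta>)) (PiM UNIV (\<lambda>_. borel)) (\<lambda>\<omega> (x::'x). \<omega> (Inl x) * \<omega> (Inr (Inl x)))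
     = PiM UNIV (\<lambda>_. BG \<theta>)"
proof -
  interpret prob_space "PiM UNIV (latent \<theta>) :: ('x + ('x + 'x) \<Rightarrow> real) measure"
    by (intro prob_space_PiM prob_space_latent)
  define K :: "'x \<Rightarrow> ('x + ('x + 'x)) set" where "K x = {Inl x, Inr (Inl x)}" for x
  have "indep_vars (\<lambda>_. borel) (\<lambda>x \<omega>. (\<lambda>f. f (Inl x) * f (Inr (Inl x))) (restrict \<omega> (K x))) UNIV"
    by (rule indep_vars_PiM_blocks[OF prob_space_latent]) (auto simp: K_def disjoint_family_on_def)
  then have indep: "indep_vars (\<lambda>_. borel) (\<lambda>x \<omega>. \<omega> (Inl x) * \<omega> (Inr (Inl x))) UNIV"
    by (simp add: K_def)
  have law: "distr (PiM UNIV (latent \<theta>)) borel (\<lambda>\<omega>. \<omega> (Inl x) * \<omega> (Inr (Inl x))) = BG \<theta>" for x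
  proof -
    have "distr (PiM UNIV (latent \<theta>)) borel (\<lambda>\<omega>. \<omega> (Inl x) * \<omega> (Inr (Inl x))) =
        distr (distr (PiM UNIV (latent \<theta>)) (latent \<theta> (Inl x) \<Otimes>\<^sub>M latent \<theta> (Inr (Inl x)))
          (\<lambda>\<omega>. (\<omega> (Inl x), \<omega> (Inr (Inl x))))) borel (\<lambda>(b, g). b * g)"
      by (subst distr_distr) (auto simp: comp_def)
    also have "\<dots> = BG \<theta>"
      by (subst distr_PiM_two_components[OF prob_space_latent]) (simp_all add: BG_eq_distr_mult)
    finally show ?thesis .
  qed
  from indep have "distr (PiM UNIV (latent \<theta>)) (PiM UNIV (\<lambda>_. borel))
      (\<lambda>\<omega>. \<lambda>x\<in>UNIV. \<omega> (Inl x) * \<omega> (Inr (Inl (x::'x)))) =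
      PiM UNIV (\<lambda>x. distr (PiM UNIV (latent \<theta>)) borel (\<lambda>\<omega>. \<omega> (Inl x) * \<omega> (Inr (Inl x))))"
    by (subst (asm) indep_vars_iff_distr_eq_PiM') auto
  then show ?thesis by (simp add: law restrict_UNIV)
qed

lemma distr_latent_noise:
  "distr (PiM UNIV (latent \<theta>)) (PiM UNIV (\<lambda>_. borel)) (\<lambda>\<omega> (x::'x). \<eta> * \<omega> (Inr (Inr x)))
     = PiM UNIV (\<lambda>_. gauss \<eta>)"
proof -
  interpret prob_space "PiM UNIV (latent \<theta>) :: ('x + ('x + 'x) \<Rightarrow> real) measure"
    by (intro prob_space_PiM prob_space_latent)
  define K :: "'x \<Rightarrow> ('x + ('x + 'x)) set" where "K x = {Inr (Inr x)}" for x
  have "indep_vars (\<lambda>_. borel) (\<lambda>x \<omega>. (\<lambda>f. \<eta> * f (Inr (Inr x))) (restrict \<omega> (K x))) UNIV"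
    by (rule indep_vars_PiM_blocks[OF prob_space_latent]) (auto simp: K_def disjoint_family_on_def)
  then have indep: "indep_vars (\<lambda>_. borel) (\<lambda>x \<omega>. \<eta> * \<omega> (Inr (Inr x))) UNIV"
    by (simp add: K_def)
  have law: "distr (PiM UNIV (latent \<theta>)) borel (\<lambda>\<omega>. \<eta> * \<omega> (Inr (Inr x))) = gauss \<eta>" for x
  proof -
    have "distr (PiM UNIV (latent \<theta>)) borel (\<lambda>\<omega>. \<eta> * \<omega> (Inr (Inr x))) =
        distr (distr (PiM UNIV (latent \<theta>)) (latent \<theta> (Inr (Inr x))) (\<lambda>\<omega>. \<omega> (Inr (Inr x))))
          borel (\<lambda>z. \<eta> * z)"
      by (subst distr_distr) (auto simp: comp_def measurable_cong_sets[OF sets_std_normal refl])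
    also have "\<dots> = gauss \<eta>"
      by (subst distr_PiM_component[OF prob_space_latent]) (simp_all add: gauss_def)
    finally show ?thesis .
  qed
  from indep have "distr (PiM UNIV (latent \<theta>)) (PiM UNIV (\<lambda>_. borel))
      (\<lambda>\<omega>. \<lambda>x\<in>UNIV. \<eta> * \<omega> (Inr (Inr (x::'x)))) =
      PiM UNIV (\<lambda>x. distr (PiM UNIV (latent \<theta>)) borel (\<lambda>\<omega>. \<eta> * \<omega> (Inr (Inr x))))"
    by (subst (asm) indep_vars_iff_distr_eq_PiM') auto
  then show ?thesis by (simp add: law restrict_UNIV)
qed

definition latent_data :: "real \<Rightarrow> ('x + ('x + 'x) \<Rightarrow> real) \<Rightarrow> ('x \<Rightarrow> real) \<times> ('x \<Rightarrow> real)" where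
  "latent_data \<eta> \<omega> = (\<lambda>x. \<omega> (Inl x) * \<omega> (Inr (Inl x)), \<lambda>x. \<eta> * \<omega> (Inr (Inr x)))"

lemma measurable_latent_data [measurable]:
  "latent_data \<eta> \<in> measurable (PiM UNIV (latent \<theta>)) (PiM UNIV (\<lambda>_. borel) \<Otimes>\<^sub>M PiM UNIV (\<lambda>_. borel))"
proof -
  have "(\<lambda>\<omega>. \<lambda>x\<in>UNIV. \<omega> (Inl x) * \<omega> (Inr (Inl x))) \<in> measurable (PiM UNIV (latent \<theta>)) (PiM UNIV (\<lambda>_. borel))"
    "(\<lambda>\<omega>. \<lambda>x\<in>UNIV. \<eta> * \<omega> (Inr (Inr x))) \<in> measurable (PiM UNIV (latent \<theta>)) (PiM UNIV (\<lambda>_. borel))"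
    by measurable
  then show ?thesis
    unfolding latent_data_def by (intro measurable_Pair) (simp_all add: restrict_UNIV)
qed

lemma BG_gauss_eq_distr_latent:
  "PiM UNIV (\<lambda>_. BG \<theta>) \<Otimes>\<^sub>M PiM UNIV (\<lambda>_. gauss \<eta>) =
   distr (PiM UNIV (latent \<theta>)) (PiM UNIV (\<lambda>_. borel) \<Otimes>\<^sub>M PiM (UNIV :: 'x set) (\<lambda>_. borel)) (latent_data \<eta>)"
proof -
  interpret prob_space "PiM UNIV (latent \<theta>) :: ('x + ('x + 'x) \<Rightarrow> real) measure"
    by (intro prob_space_PiM prob_space_latent)
  define A :: "('x + ('x + 'x)) set" where "A = range Inl \<union> range (Inr \<circ> Inl)"
  define B :: "('x + ('x + 'x)) set" where "B = range (Inr \<circ> Inr)"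
  have "(\<lambda>f. \<lambda>x\<in>UNIV. f (Inl x) * f (Inr (Inl x))) \<in> measurable (PiM A (latent \<theta>)) (PiM UNIV (\<lambda>_. borel))"
    "(\<lambda>f. \<lambda>x\<in>UNIV. \<eta> * f (Inr (Inr x))) \<in> measurable (PiM B (latent \<theta>)) (PiM UNIV (\<lambda>_. borel))"
    unfolding A_def B_def by measurable
  then have "indep_var (PiM UNIV (\<lambda>_. borel)) (\<lambda>\<omega>. (\<lambda>f x. f (Inl x) * f (Inr (Inl x))) (restrict \<omega> A))
      (PiM UNIV (\<lambda>_. borel)) (\<lambda>\<omega>. (\<lambda>f x. \<eta> * f (Inr (Inr x))) (restrict \<omega> B))"
    by (intro indep_var_PiM_blocks[OF prob_space_latent]) (auto simp: A_def B_def restrict_UNIV)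
  then have "indep_var (PiM UNIV (\<lambda>_. borel)) (\<lambda>\<omega> x. \<omega> (Inl x) * \<omega> (Inr (Inl x)))
      (PiM UNIV (\<lambda>_. borel)) (\<lambda>\<omega> (x::'x). \<eta> * \<omega> (Inr (Inr x)))"
    by (simp add: A_def B_def)
  then show ?thesis
    unfolding latent_data_def
    by (subst (asm) indep_var_distribution_eq) (simp add: distr_latent_signal distr_latent_noise)
qed

section \<open>Absolute moments of Gaussian linear combinations\<close>

definition std_normal_abs_moment :: "nat \<Rightarrow> real" where
  "std_normal_abs_moment p = (\<integral>x. std_normal_density x * \<bar>x\<bar> ^ p \<partial>lborel)"

lemma std_normal_abs_moment_pos: "std_normal_abs_moment p > 0"
proof -
  have int: "integrable lborel (\<lambda>x. std_normal_density x * \<bar>x\<bar> ^ p)"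
    by (rule integrable_std_normal_moment_abs)
  have nonneg: "AE x in lborel. 0 \<le> std_normal_density x * \<bar>x\<bar> ^ p" by simp
  have "std_normal_abs_moment p \<noteq> 0"
  proof
    assume "std_normal_abs_moment p = 0"
    then have "AE x in lborel. std_normal_density x * \<bar>x\<bar> ^ p = 0"
      unfolding std_normal_abs_moment_def using integral_nonneg_eq_0_iff_AE[OF int nonneg] by simp
    then have "AE x in lborel. (x::real) = 0"
    proof eventually_elim
      case (elim x)
      then show ?case using normal_density_pos[of 1 0 x] by simp
    qed
    then have "emeasure lborel {x::real. x \<noteq> 0} = 0"
      by (subst (asm) AE_iff_measurable[OF _ refl]) auto
    moreover have "emeasure lborel {1::real..2} \<le> emeasure lborel {x::real. x \<noteq> 0}"
      by (intro emeasure_mono) auto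
    ultimately show False by simp
  qed
  moreover have "std_normal_abs_moment p \<ge> 0"
    unfolding std_normal_abs_moment_def by (intro integral_nonneg_AE nonneg)
  ultimately show ?thesis by simp
qed

text \<open>The \<open>p\<close>-th absolute moment of the centred normal law with variance \<open>v\<close>.\<close>

definition normal_abs_moment :: "nat \<Rightarrow> real \<Rightarrow> real" where
  "normal_abs_moment p v = sqrt v ^ p * std_normal_abs_moment p"

lemma nn_integral_abs_pow_gaussian_combination:
  fixes N :: "'k \<Rightarrow> real measure"
  assumes "finite J" and N: "\<And>k. k \<in> J \<Longrightarrow> N k = std_normal" and "p > 0"
  shows "(\<integral>\<^sup>+\<omega>. ennreal (\<bar>\<Sum>k\<in>J. d k * \<omega> k\<bar> ^ p) \<partial>PiM J N) =
    ennreal (normal_abs_moment p (\<Sum>k\<in>J. (d k)\<^sup>2))"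
proof -
  have prob_N: "prob_space (N k)" if "k \<in> J" for k using N[OF that] prob_space_std_normal by simp
  interpret prob_space "PiM J N" by (intro prob_space_PiM prob_N)
  define J' where "J' = {k\<in>J. d k \<noteq> 0}"
  have "finite J'" using \<open>finite J\<close> by (simp add: J'_def)
  have sum_J': "(\<Sum>k\<in>J. d k * \<omega> k) = (\<Sum>k\<in>J'. d k * \<omega> k)" for \<omega>
    unfolding J'_def by (rule sum.mono_neutral_right) (auto simp: \<open>finite J\<close>)
  have sum_sq_J': "(\<Sum>k\<in>J. (d k)\<^sup>2) = (\<Sum>k\<in>J'. \<bar>d k\<bar>\<^sup>2)"
    unfolding J'_def by (subst sum.mono_neutral_right[of J]) (auto simp: \<open>finite J\<close>)
  show ?thesis
  proof (cases "J' = {}")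
    case True
    then show ?thesis using \<open>p > 0\<close> by (simp add: sum_J' sum_sq_J' normal_abs_moment_def power_0_left)
  next
    case False
    have std: "distributed (PiM J N) lborel (\<lambda>\<omega>. \<omega> k) std_normal_density" if "k \<in> J" for k
    proof -
      have "distr (PiM J N) lborel (\<lambda>\<omega>. \<omega> k) = distr (PiM J N) (N k) (\<lambda>\<omega>. \<omega> k)"
        by (intro distr_cong) (auto simp: N[OF that])
      also have "\<dots> = N k" by (rule distr_PiM_component[OF prob_N that])
      finally show ?thesis
        unfolding distributed_def
        using measurable_component_singleton[OF that, of N] N[OF that] by (simp add: std_normal_def)
    qed
    have "indep_vars N (\<lambda>k \<omega>. \<omega> k) J"
      by (rule indep_vars_PiM_components[OF prob_N]) (use False J'_def in auto)
    then have "indep_vars (\<lambda>_. borel) (\<lambda>k \<omega>. (\<lambda>x. d k * x) (\<omega> k)) J"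
      by (rule indep_vars_compose2) (simp add: N measurable_cong_sets[OF sets_std_normal refl])
    then have indep: "indep_vars (\<lambda>_. borel) (\<lambda>k \<omega>. d k * \<omega> k) J'"
      by (rule indep_vars_subset) (auto simp: J'_def)
    define \<sigma> where "\<sigma> = sqrt (\<Sum>k\<in>J'. \<bar>d k\<bar>\<^sup>2)"
    have "\<sigma> > 0" unfolding \<sigma>_def using False \<open>finite J'\<close>
      by (intro real_sqrt_gt_zero sum_pos) (auto simp: J'_def)
    have "distributed (PiM J N) lborel (\<lambda>\<omega>. \<Sum>k\<in>J'. d k * \<omega> k)
        (normal_density (\<Sum>k\<in>J'. 0) (sqrt (\<Sum>k\<in>J'. \<bar>d k\<bar>\<^sup>2)))"
      by (rule sum_indep_normal[OF \<open>finite J'\<close> False indep])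
        (use normal_density_affine[OF std, of _ "d _" 0] in \<open>auto simp: J'_def\<close>)
    then have normalized: "distributed (PiM J N) lborel (\<lambda>\<omega>. (\<Sum>k\<in>J'. d k * \<omega> k) / \<sigma>) std_normal_density"
      using normal_standard_normal_convert[OF \<open>\<sigma> > 0\<close>] by (simp add: \<sigma>_def)
    then have [measurable]: "(\<lambda>\<omega>. (\<Sum>k\<in>J'. d k * \<omega> k) / \<sigma>) \<in> borel_measurable (PiM J N)"
      by (simp add: distributed_def)
    have "(\<integral>\<^sup>+\<omega>. ennreal (\<bar>\<Sum>k\<in>J. d k * \<omega> k\<bar> ^ p) \<partial>PiM J N) =
        (\<integral>\<^sup>+\<omega>. ennreal (\<sigma> ^ p) * ennreal (\<bar>(\<Sum>k\<in>J'. d k * \<omega> k) / \<sigma>\<bar> ^ p) \<partial>PiM J N)"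
      using \<open>\<sigma> > 0\<close>
      by (intro nn_integral_cong) (simp add: sum_J' ennreal_mult'[symmetric] power_divide abs_div)
    also have "\<dots> = ennreal (\<sigma> ^ p) * (\<integral>\<^sup>+\<omega>. ennreal (\<bar>(\<Sum>k\<in>J'. d k * \<omega> k) / \<sigma>\<bar> ^ p) \<partial>PiM J N)"
      by (rule nn_integral_cmult) measurable
    also have "(\<integral>\<^sup>+\<omega>. ennreal (\<bar>(\<Sum>k\<in>J'. d k * \<omega> k) / \<sigma>\<bar> ^ p) \<partial>PiM J N) =
        (\<integral>\<^sup>+x. ennreal (std_normal_density x) * ennreal (\<bar>x\<bar> ^ p) \<partial>lborel)"
      by (rule distributed_nn_integral[OF normalized, symmetric]) simp
    also have "\<dots> = ennreal (std_normal_abs_moment p)"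
      unfolding std_normal_abs_moment_def
      by (subst nn_integral_eq_integral[symmetric])
        (auto simp: ennreal_mult'[symmetric] integrable_std_normal_moment_abs intro!: nn_integral_cong)
    finally show ?thesis
      using \<open>\<sigma> > 0\<close>
      by (simp add: \<sigma>_def sum_sq_J' ennreal_mult'[symmetric] normal_abs_moment_def std_normal_abs_moment_def)
  qed
qed

text \<open>Conditionally on the mask, the data entries are a Gaussian combination of the remaining
  latent coordinates; integrating those out first (Fubini) leaves a moment of the mask only.\<close>

lemma nn_integral_latent_combination:
  fixes c e :: "'x::finite \<Rightarrow> real"
  assumes "p > 0"
  shows "(\<integral>\<^sup>+\<omega>. ennreal (\<bar>(\<Sum>x\<in>UNIV. c x * \<omega> (Inl x) * \<omega> (Inr (Inl x))) +
              (\<Sum>x\<in>UNIV. e x * \<omega> (Inr (Inr x)))\<bar> ^ p) \<partial>PiM UNIV (latent \<theta>)) =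
    (\<integral>\<^sup>+b. ennreal (normal_abs_moment p ((\<Sum>x\<in>UNIV. (c x * b (Inl x))\<^sup>2) + (\<Sum>x\<in>UNIV. (e x)\<^sup>2)))
      \<partial>(PiM (range Inl) (\<lambda>_. bernoulli_real \<theta>) :: ('x + ('x + 'x) \<Rightarrow> real) measure))"
proof -
  let ?f = "\<lambda>\<omega>. ennreal (\<bar>(\<Sum>x\<in>UNIV. c x * \<omega> (Inl x) * \<omega> (Inr (Inl x))) +
              (\<Sum>x\<in>UNIV. e x * \<omega> (Inr (Inr x)))\<bar> ^ p)"
  interpret product_sigma_finite "latent \<theta> :: 'x + ('x + 'x) \<Rightarrow> real measure"
    unfolding product_sigma_finite_def using prob_space_latent by (metis prob_space_imp_sigma_finite)
  have sum_range_Inr: "(\<Sum>k\<in>range Inr. d k) = (\<Sum>x\<in>UNIV. d (Inr (Inl x))) + (\<Sum>x\<in>UNIV. d (Inr (Inr x)))"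
    for d :: "'x + ('x + 'x) \<Rightarrow> real"
    by (simp add: sum.reindex UNIV_Plus_UNIV[symmetric] sum.Plus del: UNIV_Plus_UNIV)
  have "(\<integral>\<^sup>+\<omega>. ?f \<omega> \<partial>PiM UNIV (latent \<theta>)) = (\<integral>\<^sup>+\<omega>. ?f \<omega> \<partial>PiM (range Inl \<union> range Inr) (latent \<theta>))"
    by (simp only: UNIV_sum[symmetric])
  also have "\<dots> = (\<integral>\<^sup>+b. \<integral>\<^sup>+\<omega>. ?f (merge (range Inl) (range Inr) (b, \<omega>))
      \<partial>PiM (range Inr) (latent \<theta>) \<partial>PiM (range Inl) (latent \<theta>))"
    by (rule product_nn_integral_fold) auto
  also have "\<dots> = (\<integral>\<^sup>+b. ennreal (normal_abs_moment p ((\<Sum>x\<in>UNIV. (c x * b (Inl x))\<^sup>2) +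
      (\<Sum>x\<in>UNIV. (e x)\<^sup>2))) \<partial>PiM (range Inl) (latent \<theta>))"
  proof (rule nn_integral_cong)
    fix b :: "'x + ('x + 'x) \<Rightarrow> real"
    define d :: "'x + ('x + 'x) \<Rightarrow> real" where
      "d k = (case k of Inl _ \<Rightarrow> 0 | Inr (Inl x) \<Rightarrow> c x * b (Inl x) | Inr (Inr x) \<Rightarrow> e x)" for k
    have "?f (merge (range Inl) (range Inr) (b, \<omega>)) = ennreal (\<bar>\<Sum>k\<in>range Inr. d k * \<omega> k\<bar> ^ p)" for \<omega>
      by (auto simp: sum_range_Inr d_def merge_def image_iff mult.assoc mult.left_commute)
    moreover have "(\<Sum>k\<in>range Inr. (d k)\<^sup>2) = (\<Sum>x\<in>UNIV. (c x * b (Inl x))\<^sup>2) + (\<Sum>x\<in>UNIV. (e x)\<^sup>2)"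
      by (simp add: sum_range_Inr d_def)
    moreover have "(\<integral>\<^sup>+\<omega>. ennreal (\<bar>\<Sum>k\<in>range Inr. d k * \<omega> k\<bar> ^ p) \<partial>PiM (range Inr) (latent \<theta>)) =
        ennreal (normal_abs_moment p (\<Sum>k\<in>range Inr. (d k)\<^sup>2))"
      by (rule nn_integral_abs_pow_gaussian_combination[OF _ _ \<open>p > 0\<close>]) auto
    ultimately show "(\<integral>\<^sup>+\<omega>. ?f (merge (range Inl) (range Inr) (b, \<omega>)) \<partial>PiM (range Inr) (latent \<theta>)) =
        ennreal (normal_abs_moment p ((\<Sum>x\<in>UNIV. (c x * b (Inl x))\<^sup>2) + (\<Sum>x\<in>UNIV. (e x)\<^sup>2)))"
      by simp
  qed
  also have "PiM (range Inl) (latent \<theta>) = PiM (range Inl) (\<lambda>_. bernoulli_real \<theta>)"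
    by (rule PiM_cong) auto
  finally show ?thesis .
qed

lemma strict_chord_of_deriv_strict_mono:
  fixes \<phi> D :: "real \<Rightarrow> real"
  assumes "x < y" "0 < t" "t < 1" and cont: "continuous_on {x..y} \<phi>"
    and deriv: "\<And>z. x < z \<Longrightarrow> z < y \<Longrightarrow> (\<phi> has_real_derivative D z) (at z)"
    and mono: "strict_mono_on {x<..<y} D"
  shows "\<phi> ((1 - t) * x + t * y) < (1 - t) * \<phi> x + t * \<phi> y"
proof -
  define s where "s = (1 - t) * x + t * y"
  have "t * x < t * y" "(1 - t) * x < (1 - t) * y"
    using \<open>x < y\<close> \<open>0 < t\<close> \<open>t < 1\<close> by simp_all
  then have "x < s" "s < y"
    unfolding s_def by (simp_all add: algebra_simps)
  have mvt: "\<exists>z. a < z \<and> z < b \<and> \<phi> b - \<phi> a = (b - a) * D z" if "x \<le> a" "a < b" "b \<le> y" for a b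
  proof -
    have "continuous_on {a..b} \<phi>" using that by (intro continuous_on_subset[OF cont]) auto
    moreover have "\<phi> differentiable at z" if "a < z" "z < b" for z
      using deriv[of z] that \<open>x \<le> a\<close> \<open>b \<le> y\<close> real_differentiable_def by force
    ultimately obtain l z where "a < z" "z < b" "(\<phi> has_real_derivative l) (at z)" "\<phi> b - \<phi> a = (b - a) * l"
      using MVT[OF \<open>a < b\<close>] by blast
    moreover have "l = D z"
      using DERIV_unique[OF \<open>(\<phi> has_real_derivative l) (at z)\<close> deriv] \<open>a < z\<close> \<open>z < b\<close> that by simp
    ultimately show ?thesis by blast
  qed
  obtain z1 where z1: "x < z1" "z1 < s" "\<phi> s - \<phi> x = (s - x) * D z1"
    using mvt[of x s] \<open>x < s\<close> \<open>s < y\<close> by auto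
  obtain z2 where z2: "s < z2" "z2 < y" "\<phi> y - \<phi> s = (y - s) * D z2"
    using mvt[of s y] \<open>x < s\<close> \<open>s < y\<close> by auto
  have "D z1 < D z2"
    using mono z1 z2 by (auto intro: strict_mono_onD)
  then have "t * (1 - t) * (y - x) * D z1 < t * (1 - t) * (y - x) * D z2"
    using \<open>x < y\<close> \<open>0 < t\<close> \<open>t < 1\<close> by simp
  moreover have "s - x = t * (y - x)" "y - s = (1 - t) * (y - x)"
    unfolding s_def by (simp_all add: algebra_simps)
  ultimately have "(1 - t) * (\<phi> s - \<phi> x) < t * (\<phi> y - \<phi> s)"
    using z1(3) z2(3) by (simp add: mult_ac)
  then show ?thesis unfolding s_def[symmetric] by (simp add: algebra_simps)
qed

lemma sqrt_pow_strict_chord: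
  fixes a s :: real and p :: nat
  assumes "a \<ge> 0" "p > 2" "0 < s" "s < 1"
  shows "sqrt (s + a) ^ p < s * sqrt (1 + a) ^ p + (1 - s) * sqrt a ^ p"
proof -
  define D where "D z = real p / 2 * sqrt (z + a) ^ (p - 2)" for z
  have "((\<lambda>t. sqrt (t + a) ^ p) has_real_derivative D z) (at z)" if "0 < z" for z
  proof -
    have "sqrt (z + a) > 0" using that \<open>a \<ge> 0\<close> by simp
    moreover have "p - 1 = Suc (p - 2)" using \<open>p > 2\<close> by linarith
    ultimately have "real p * sqrt (z + a) ^ (p - 1) / (2 * sqrt (z + a)) = D z"
      by (simp add: D_def field_simps)
    moreover have "((\<lambda>t. sqrt (t + a) ^ p) has_real_derivative
        real p * sqrt (z + a) ^ (p - 1) / (2 * sqrt (z + a))) (at z)"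
      using that \<open>a \<ge> 0\<close> by (auto intro!: derivative_eq_intros simp: field_simps)
    ultimately show ?thesis by simp
  qed
  moreover have "strict_mono_on {0<..<1} D"
    using \<open>a \<ge> 0\<close> \<open>p > 2\<close> by (intro strict_mono_onI) (auto simp: D_def intro!: power_strict_mono)
  moreover have "continuous_on {0..1} (\<lambda>t. sqrt (t + a) ^ p)"
    by (intro continuous_intros)
  ultimately show ?thesis
    using strict_chord_of_deriv_strict_mono[of 0 1 s "\<lambda>t. sqrt (t + a) ^ p" D] assms by simp
qed

lemma normal_abs_moment_strict_chord:
  assumes "a \<ge> 0" "p > 2" "0 < s" "s < 1"
  shows "normal_abs_moment p (s + a) < s * normal_abs_moment p (1 + a) + (1 - s) * normal_abs_moment p a"
  using mult_strict_right_mono[OF sqrt_pow_strict_chord[OF assms] std_normal_abs_moment_pos]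
  by (simp add: normal_abs_moment_def algebra_simps)

section \<open>Convex functions of Bernoulli-weighted sums\<close>

lemma chord_weighted_01:
  fixes g :: "real \<Rightarrow> real" and u b :: "'i \<Rightarrow> real"
  assumes "finite I" and u: "\<And>k. k \<in> I \<Longrightarrow> 0 \<le> u k" "sum u I = 1"
    and b: "\<And>k. k \<in> I \<Longrightarrow> b k = 0 \<or> b k = 1"
    and chord: "\<And>s. 0 < s \<Longrightarrow> s < 1 \<Longrightarrow> g s < s * g 1 + (1 - s) * g 0"
  shows "g (\<Sum>k\<in>I. u k * b k) \<le> (\<Sum>k\<in>I. u k * g (b k))"
    and "\<lbrakk>k1 \<in> I; k2 \<in> I; 0 < u k1; 0 < u k2; b k1 = 1; b k2 = 0\<rbrakk> \<Longrightarrow>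
      g (\<Sum>k\<in>I. u k * b k) < (\<Sum>k\<in>I. u k * g (b k))"
proof -
  define s where "s = (\<Sum>k\<in>I. u k * b k)"
  have g_b: "g (b k) = b k * g 1 + (1 - b k) * g 0" if "k \<in> I" for k
    using b[OF that] by auto
  have "(\<Sum>k\<in>I. u k * g (b k)) = (\<Sum>k\<in>I. u k * b k * g 1 + (u k * g 0 - u k * b k * g 0))"
    by (intro sum.cong) (simp_all add: g_b algebra_simps)
  also have "\<dots> = g 1 * s + (g 0 * sum u I - g 0 * s)"
    by (simp add: s_def sum.distrib sum_subtractf sum_distrib_left mult_ac)
  also have "\<dots> = s * g 1 + (1 - s) * g 0"
    by (simp add: u(2) algebra_simps)
  finally have mixture: "(\<Sum>k\<in>I. u k * g (b k)) = s * g 1 + (1 - s) * g 0" .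
  have ub: "0 \<le> u k * b k" "u k * b k \<le> u k" if "k \<in> I" for k
    using b[OF that] u(1)[OF that] by auto
  have s_le: "s \<le> 1 - u k" if "k \<in> I" "b k = 0" for k
  proof -
    have "s = u k * b k + (\<Sum>k'\<in>I - {k}. u k' * b k')"
      unfolding s_def using \<open>finite I\<close> that(1) by (rule sum.remove)
    also have "\<dots> \<le> 0 + (\<Sum>k'\<in>I - {k}. u k')"
      using that ub by (intro add_mono sum_mono) auto
    also have "(\<Sum>k'\<in>I - {k}. u k') = 1 - u k"
      using sum.remove[OF \<open>finite I\<close> \<open>k \<in> I\<close>, of u] u(2) by simp
    finally show ?thesis by simp
  qed
  have s_ge: "u k \<le> s" if "k \<in> I" "b k = 1" for k
    using member_le_sum[of k I "\<lambda>k. u k * b k"] that ub \<open>finite I\<close> unfolding s_def by simp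
  have "0 \<le> s" "s \<le> 1"
    using ub sum_mono[of I "\<lambda>k. u k * b k" u] unfolding s_def u(2)[symmetric]
    by (auto intro: sum_nonneg)
  then show "g s \<le> (\<Sum>k\<in>I. u k * g (b k))"
    using chord[of s] unfolding mixture by (cases "s = 0 \<or> s = 1") auto
  show "g s < (\<Sum>k\<in>I. u k * g (b k))"
    if "k1 \<in> I" "k2 \<in> I" "0 < u k1" "0 < u k2" "b k1 = 1" "b k2 = 0"
    using chord[of s] s_ge[of k1] s_le[of k2] that unfolding mixture by simp
qed

lemma measurable_bernoulli_real_component [measurable]:
  "k \<in> I \<Longrightarrow> (\<lambda>b. b k) \<in> borel_measurable (PiM I (\<lambda>_. bernoulli_real \<theta>))"
  using measurable_component_singleton[of k I "\<lambda>_. bernoulli_real \<theta>"]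
  by (simp add: measurable_cong_sets[OF refl sets_bernoulli_real])

lemma AE_PiM_bernoulli_real_01:
  assumes "finite I"
  shows "AE b in PiM I (\<lambda>_. bernoulli_real \<theta>). \<forall>k\<in>I. b k = 0 \<or> b k = 1"
  using assms
  by (intro AE_finite_allI AE_PiM_component prob_space_bernoulli_real AE_bernoulli_real_01)

lemma nn_integral_PiM_bernoulli_real_component:
  assumes "k \<in> I" "0 \<le> \<theta>" "\<theta> \<le> 1" and F: "\<And>t. 0 \<le> F t" "F \<in> borel_measurable borel"
  shows "(\<integral>\<^sup>+b. ennreal (F (b k)) \<partial>PiM I (\<lambda>_. bernoulli_real \<theta>)) = ennreal (\<theta> * F 1 + (1 - \<theta>) * F 0)"
proof -
  have "(\<lambda>b. b k) \<in> measurable (PiM I (\<lambda>_. bernoulli_real \<theta>)) (bernoulli_real \<theta>)"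
    using \<open>k \<in> I\<close> by (rule measurable_component_singleton)
  then have "(\<integral>\<^sup>+b. ennreal (F (b k)) \<partial>PiM I (\<lambda>_. bernoulli_real \<theta>)) =
      (\<integral>\<^sup>+t. ennreal (F t) \<partial>distr (PiM I (\<lambda>_. bernoulli_real \<theta>)) (bernoulli_real \<theta>) (\<lambda>b. b k))"
    using F(2) by (subst nn_integral_distr) (auto simp: measurable_cong_sets[OF sets_bernoulli_real refl])
  also have "distr (PiM I (\<lambda>_. bernoulli_real \<theta>)) (bernoulli_real \<theta>) (\<lambda>b. b k) = bernoulli_real \<theta>"
    using \<open>k \<in> I\<close> by (intro distr_PiM_component prob_space_bernoulli_real)
  finally show ?thesis
    using nn_integral_bernoulli_real[OF \<open>0 \<le> \<theta>\<close> \<open>\<theta> \<le> 1\<close> F] by simp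
qed

lemma emeasure_PiM_bernoulli_real_1_0:
  assumes "k1 \<in> I" "k2 \<in> I" "k1 \<noteq> k2" "0 \<le> \<theta>" "\<theta> \<le> 1"
  shows "emeasure (PiM I (\<lambda>_. bernoulli_real \<theta>))
      {b \<in> space (PiM I (\<lambda>_. bernoulli_real \<theta>)). b k1 = 1 \<and> b k2 = 0} = ennreal (\<theta> * (1 - \<theta>))"
proof -
  define A where "A k = (if k = k1 then {1::real} else {0})" for k
  have event: "{b \<in> space (PiM I (\<lambda>_. bernoulli_real \<theta>)). b k1 = 1 \<and> b k2 = 0} =
      prod_emb I (\<lambda>_. bernoulli_real \<theta>) {k1, k2} (Pi\<^sub>E {k1, k2} A)"
    using \<open>k1 \<noteq> k2\<close> by (auto simp: prod_emb_def A_def space_PiM)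
  show ?thesis
    unfolding event using assms
    by (subst emeasure_PiM_emb[OF prob_space_bernoulli_real])
      (auto simp: A_def emeasure_bernoulli_real ennreal_mult)
qed

lemma nn_integral_PiM_bernoulli_real_mixture:
  assumes "finite I" "0 \<le> \<theta>" "\<theta> \<le> 1" and u: "\<And>k. k \<in> I \<Longrightarrow> 0 \<le> u k" "sum u I = 1"
    and g: "\<And>t. 0 \<le> t \<Longrightarrow> 0 \<le> g t" "g \<in> borel_measurable borel"
  shows "(\<integral>\<^sup>+b. ennreal (\<Sum>k\<in>I. u k * g ((b k)\<^sup>2)) \<partial>PiM I (\<lambda>_. bernoulli_real \<theta>)) =
    ennreal (\<theta> * g 1 + (1 - \<theta>) * g 0)"
proof -
  let ?B = "PiM I (\<lambda>_. bernoulli_real \<theta>)"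
  note [measurable] = g(2)
  have "(\<integral>\<^sup>+b. ennreal (\<Sum>k\<in>I. u k * g ((b k)\<^sup>2)) \<partial>?B) =
      (\<integral>\<^sup>+b. (\<Sum>k\<in>I. ennreal (u k * g ((b k)\<^sup>2))) \<partial>?B)"
    using u g by (intro nn_integral_cong) (simp add: sum_ennreal)
  also have "\<dots> = (\<Sum>k\<in>I. \<integral>\<^sup>+b. ennreal (u k * g ((b k)\<^sup>2)) \<partial>?B)"
    by (rule nn_integral_sum) measurable
  also have "\<dots> = (\<Sum>k\<in>I. ennreal (u k * (\<theta> * g 1 + (1 - \<theta>) * g 0)))"
  proof (rule sum.cong[OF refl])
    fix k assume "k \<in> I"
    then show "(\<integral>\<^sup>+b. ennreal (u k * g ((b k)\<^sup>2)) \<partial>?B) = ennreal (u k * (\<theta> * g 1 + (1 - \<theta>) * g 0))"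
      using u g \<open>0 \<le> \<theta>\<close> \<open>\<theta> \<le> 1\<close>
      by (subst nn_integral_PiM_bernoulli_real_component[where F = "\<lambda>t. u k * g (t\<^sup>2)"])
        (auto simp: algebra_simps)
  qed
  also have "\<dots> = ennreal (\<Sum>k\<in>I. u k * (\<theta> * g 1 + (1 - \<theta>) * g 0))"
    using u g \<open>0 \<le> \<theta>\<close> \<open>\<theta> \<le> 1\<close> by (intro sum_ennreal) simp
  also have "\<dots> = ennreal (\<theta> * g 1 + (1 - \<theta>) * g 0)"
    by (simp add: sum_distrib_right[symmetric] u(2))
  finally show ?thesis .
qed

lemma two_positive_weights:
  fixes u :: "'i \<Rightarrow> real"
  assumes "finite I" "\<And>k. k \<in> I \<Longrightarrow> 0 \<le> u k" "sum u I = 1" "\<not> (\<exists>k\<in>I. u k = 1)"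
  obtains k1 k2 where "k1 \<in> I" "k2 \<in> I" "k1 \<noteq> k2" "0 < u k1" "0 < u k2"
proof -
  obtain k1 where "k1 \<in> I" "0 < u k1"
    using assms(2,3) by (metis less_eq_real_def sum.neutral zero_neq_one)
  have rest: "sum u (I - {k1}) = 1 - u k1"
    using sum.remove[OF \<open>finite I\<close> \<open>k1 \<in> I\<close>, of u] assms(3) by simp
  moreover have "u k1 \<noteq> 1" using assms(4) \<open>k1 \<in> I\<close> by blast
  ultimately have "sum u (I - {k1}) \<noteq> 0" by simp
  then obtain k2 where "k2 \<in> I - {k1}" "u k2 \<noteq> 0" by (meson sum.neutral)
  with assms(2) have "k2 \<in> I" "k1 \<noteq> k2" "0 < u k2" by force+
  with \<open>k1 \<in> I\<close> \<open>0 < u k1\<close> that show ?thesis by blast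
qed

lemma AE_PiM_bernoulli_real_chord:
  fixes g :: "real \<Rightarrow> real" and u :: "'i \<Rightarrow> real"
  assumes "finite I" and u: "\<And>k. k \<in> I \<Longrightarrow> 0 \<le> u k" "sum u I = 1"
    and chord: "\<And>s. 0 < s \<Longrightarrow> s < 1 \<Longrightarrow> g s < s * g 1 + (1 - s) * g 0"
  shows "AE b in PiM I (\<lambda>_. bernoulli_real \<theta>).
      g (\<Sum>k\<in>I. u k * (b k)\<^sup>2) \<le> (\<Sum>k\<in>I. u k * g ((b k)\<^sup>2))"
    and "\<lbrakk>k1 \<in> I; k2 \<in> I; 0 < u k1; 0 < u k2\<rbrakk> \<Longrightarrow> AE b in PiM I (\<lambda>_. bernoulli_real \<theta>).
      b k1 = 1 \<and> b k2 = 0 \<longrightarrow> g (\<Sum>k\<in>I. u k * (b k)\<^sup>2) < (\<Sum>k\<in>I. u k * g ((b k)\<^sup>2))"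
proof -
  have AE_01: "AE b in PiM I (\<lambda>_. bernoulli_real \<theta>). \<forall>k\<in>I. (b k)\<^sup>2 = 0 \<or> (b k)\<^sup>2 = 1"
    using AE_PiM_bernoulli_real_01[OF \<open>finite I\<close>] by eventually_elim auto
  then show "AE b in PiM I (\<lambda>_. bernoulli_real \<theta>).
      g (\<Sum>k\<in>I. u k * (b k)\<^sup>2) \<le> (\<Sum>k\<in>I. u k * g ((b k)\<^sup>2))"
    by eventually_elim (auto intro!: chord_weighted_01(1)[OF \<open>finite I\<close> u _ chord])
  show "AE b in PiM I (\<lambda>_. bernoulli_real \<theta>).
      b k1 = 1 \<and> b k2 = 0 \<longrightarrow> g (\<Sum>k\<in>I. u k * (b k)\<^sup>2) < (\<Sum>k\<in>I. u k * g ((b k)\<^sup>2))"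
    if "k1 \<in> I" "k2 \<in> I" "0 < u k1" "0 < u k2"
    using AE_01
  proof eventually_elim
    case (elim b)
    show ?case
    proof
      assume "b k1 = 1 \<and> b k2 = 0"
      then show "g (\<Sum>k\<in>I. u k * (b k)\<^sup>2) < (\<Sum>k\<in>I. u k * g ((b k)\<^sup>2))"
        using elim that
        by (intro chord_weighted_01(2)[OF \<open>finite I\<close> u _ chord, of "\<lambda>k. (b k)\<^sup>2" k1 k2]) auto
    qed
  qed
qed

lemma nn_integral_PiM_bernoulli_real_convex_le:
  fixes g :: "real \<Rightarrow> real" and u :: "'i \<Rightarrow> real"
  assumes "finite I" "0 \<le> \<theta>" "\<theta> \<le> 1" and u: "\<And>k. k \<in> I \<Longrightarrow> 0 \<le> u k" "sum u I = 1"
    and g: "\<And>t. 0 \<le> t \<Longrightarrow> 0 \<le> g t" "g \<in> borel_measurable borel"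
    and chord: "\<And>s. 0 < s \<Longrightarrow> s < 1 \<Longrightarrow> g s < s * g 1 + (1 - s) * g 0"
  shows "(\<integral>\<^sup>+b. ennreal (g (\<Sum>k\<in>I. u k * (b k)\<^sup>2)) \<partial>PiM I (\<lambda>_. bernoulli_real \<theta>)) \<le>
      ennreal (\<theta> * g 1 + (1 - \<theta>) * g 0)"
proof -
  have "(\<integral>\<^sup>+b. ennreal (g (\<Sum>k\<in>I. u k * (b k)\<^sup>2)) \<partial>PiM I (\<lambda>_. bernoulli_real \<theta>)) \<le>
      (\<integral>\<^sup>+b. ennreal (\<Sum>k\<in>I. u k * g ((b k)\<^sup>2)) \<partial>PiM I (\<lambda>_. bernoulli_real \<theta>))"
  proof (rule nn_integral_mono_AE)
    show "AE b in PiM I (\<lambda>_. bernoulli_real \<theta>).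
        ennreal (g (\<Sum>k\<in>I. u k * (b k)\<^sup>2)) \<le> ennreal (\<Sum>k\<in>I. u k * g ((b k)\<^sup>2))"
    proof -
      have "AE b in PiM I (\<lambda>_. bernoulli_real \<theta>).
          g (\<Sum>k\<in>I. u k * (b k)\<^sup>2) \<le> (\<Sum>k\<in>I. u k * g ((b k)\<^sup>2))"
        using u chord by (rule AE_PiM_bernoulli_real_chord(1)[OF \<open>finite I\<close>])
      then show ?thesis by eventually_elim (rule ennreal_leI)
    qed
  qed
  then show ?thesis
    by (simp only: nn_integral_PiM_bernoulli_real_mixture[OF assms(1-3) u g])
qed

text \<open>Strictness of Jensen's inequality comes from the event that one positively weighted
  coordinate is \<open>1\<close> and another one is \<open>0\<close>, which has probability \<open>\<theta> (1 - \<theta>) > 0\<close>.\<close>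

lemma nn_integral_PiM_bernoulli_real_convex_less:
  fixes g :: "real \<Rightarrow> real" and u :: "'i \<Rightarrow> real"
  assumes "finite I" "0 < \<theta>" "\<theta> < 1" and u: "\<And>k. k \<in> I \<Longrightarrow> 0 \<le> u k" "sum u I = 1"
    and g: "\<And>t. 0 \<le> t \<Longrightarrow> 0 \<le> g t" "g \<in> borel_measurable borel"
    and chord: "\<And>s. 0 < s \<Longrightarrow> s < 1 \<Longrightarrow> g s < s * g 1 + (1 - s) * g 0"
    and k: "k1 \<in> I" "k2 \<in> I" "k1 \<noteq> k2" "0 < u k1" "0 < u k2"
  shows "(\<integral>\<^sup>+b. ennreal (g (\<Sum>k\<in>I. u k * (b k)\<^sup>2)) \<partial>PiM I (\<lambda>_. bernoulli_real \<theta>)) <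
      ennreal (\<theta> * g 1 + (1 - \<theta>) * g 0)"
proof -
  let ?B = "PiM I (\<lambda>_. bernoulli_real \<theta>)"
  define s where "s b = (\<Sum>k\<in>I. u k * (b k)\<^sup>2)" for b :: "'i \<Rightarrow> real"
  define R where "R b = (\<Sum>k\<in>I. u k * g ((b k)\<^sup>2))" for b :: "'i \<Rightarrow> real"
  note [measurable] = g(2)
  have measurable_s_R [measurable]: "s \<in> borel_measurable ?B" "R \<in> borel_measurable ?B"
    unfolding s_def R_def by measurable
  have "0 \<le> \<theta>" "\<theta> \<le> 1" using \<open>0 < \<theta>\<close> \<open>\<theta> < 1\<close> by simp_all
  have event: "{b \<in> space ?B. b k1 = 1 \<and> b k2 = 0} \<in> sets ?B"
  proof -
    have "{b \<in> space ?B. b k1 = 1 \<and> b k2 = 0} =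
        ((\<lambda>b. b k1) -` {1} \<inter> space ?B) \<inter> ((\<lambda>b. b k2) -` {0} \<inter> space ?B)"
      by auto
    then show ?thesis
      using k(1,2) by (auto intro!: measurable_sets measurable_bernoulli_real_component)
  qed
  have "AE b in ?B. b k1 = 1 \<and> b k2 = 0 \<longrightarrow> g (\<Sum>k\<in>I. u k * (b k)\<^sup>2) < (\<Sum>k\<in>I. u k * g ((b k)\<^sup>2))"
    using u chord k(1,2,4,5) by (rule AE_PiM_bernoulli_real_chord(2)[OF \<open>finite I\<close>])
  then have strict: "AE b in ?B. b k1 = 1 \<and> b k2 = 0 \<longrightarrow> g (s b) < R b"
    by (simp add: s_def R_def)
  have g_s_nonneg: "0 \<le> g (s b)" for b
    unfolding s_def using u(1) g(1) by (simp add: sum_nonneg)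
  have not_AE: "\<not> (AE b in ?B. ennreal (R b) \<le> ennreal (g (s b)))"
  proof
    assume "AE b in ?B. ennreal (R b) \<le> ennreal (g (s b))"
    with strict have "AE b in ?B. \<not> (b k1 = 1 \<and> b k2 = 0)"
    proof eventually_elim
      case (elim b)
      then show ?case using g_s_nonneg[of b] by (auto simp: ennreal_le_iff)
    qed
    then have "emeasure ?B {b \<in> space ?B. b k1 = 1 \<and> b k2 = 0} = 0"
      by (subst (asm) AE_iff_measurable[OF event]) auto
    then show False
      using emeasure_PiM_bernoulli_real_1_0[OF k(1-3) \<open>0 \<le> \<theta>\<close> \<open>\<theta> \<le> 1\<close>] \<open>0 < \<theta>\<close> \<open>\<theta> < 1\<close>
      by simp
  qed
  have "(\<integral>\<^sup>+b. ennreal (g (s b)) \<partial>?B) < (\<integral>\<^sup>+b. ennreal (R b) \<partial>?B)"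
  proof (rule nn_integral_less[OF _ _ _ _ not_AE])
    show "(\<integral>\<^sup>+b. ennreal (g (s b)) \<partial>?B) \<noteq> \<infinity>"
      using neq_top_trans[OF ennreal_neq_top
          nn_integral_PiM_bernoulli_real_convex_le[OF \<open>finite I\<close> \<open>0 \<le> \<theta>\<close> \<open>\<theta> \<le> 1\<close> u g chord]]
      by (simp add: s_def)
    show "AE b in ?B. ennreal (g (s b)) \<le> ennreal (R b)"
    proof -
      have "AE b in ?B. g (\<Sum>k\<in>I. u k * (b k)\<^sup>2) \<le> (\<Sum>k\<in>I. u k * g ((b k)\<^sup>2))"
        using u chord by (rule AE_PiM_bernoulli_real_chord(1)[OF \<open>finite I\<close>])
      then show ?thesis by eventually_elim (simp add: s_def R_def ennreal_leI)
    qed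
  qed (intro measurable_compose[OF _ measurable_ennreal] measurable_compose[OF _ g(2)]
      measurable_s_R)+
  then show ?thesis
    by (simp add: s_def R_def nn_integral_PiM_bernoulli_real_mixture[OF \<open>finite I\<close> \<open>0 \<le> \<theta>\<close> \<open>\<theta> \<le> 1\<close> u g])
qed

lemma nn_integral_PiM_bernoulli_real_convex_eq_iff:
  fixes g :: "real \<Rightarrow> real" and u :: "'i \<Rightarrow> real"
  assumes "finite I" "0 < \<theta>" "\<theta> < 1" and u: "\<And>k. k \<in> I \<Longrightarrow> 0 \<le> u k" "sum u I = 1"
    and g: "\<And>t. 0 \<le> t \<Longrightarrow> 0 \<le> g t" "g \<in> borel_measurable borel"
    and chord: "\<And>s. 0 < s \<Longrightarrow> s < 1 \<Longrightarrow> g s < s * g 1 + (1 - s) * g 0"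
  shows "(\<integral>\<^sup>+b. ennreal (g (\<Sum>k\<in>I. u k * (b k)\<^sup>2)) \<partial>PiM I (\<lambda>_. bernoulli_real \<theta>)) =
      ennreal (\<theta> * g 1 + (1 - \<theta>) * g 0) \<longleftrightarrow> (\<exists>k\<in>I. u k = 1)"
proof
  assume "\<exists>k\<in>I. u k = 1"
  then obtain k0 where "k0 \<in> I" "u k0 = 1" by blast
  have "sum u (I - {k0}) = 0"
    using sum.remove[OF \<open>finite I\<close> \<open>k0 \<in> I\<close>, of u] u(2) \<open>u k0 = 1\<close> by simp
  then have "u k = 0" if "k \<in> I - {k0}" for k
    using that u(1) \<open>finite I\<close> by (subst (asm) sum_nonneg_eq_0_iff) auto
  then have "(\<Sum>k\<in>I. u k * (b k)\<^sup>2) = (b k0)\<^sup>2" for b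
    using sum.remove[OF \<open>finite I\<close> \<open>k0 \<in> I\<close>, of "\<lambda>k. u k * (b k)\<^sup>2"] \<open>u k0 = 1\<close> by simp
  then show "(\<integral>\<^sup>+b. ennreal (g (\<Sum>k\<in>I. u k * (b k)\<^sup>2)) \<partial>PiM I (\<lambda>_. bernoulli_real \<theta>)) =
      ennreal (\<theta> * g 1 + (1 - \<theta>) * g 0)"
    using \<open>k0 \<in> I\<close> \<open>0 < \<theta>\<close> \<open>\<theta> < 1\<close> g
    by (simp add: nn_integral_PiM_bernoulli_real_component[where F = "\<lambda>t. g (t\<^sup>2)"])
next
  assume eq: "(\<integral>\<^sup>+b. ennreal (g (\<Sum>k\<in>I. u k * (b k)\<^sup>2)) \<partial>PiM I (\<lambda>_. bernoulli_real \<theta>)) =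
      ennreal (\<theta> * g 1 + (1 - \<theta>) * g 0)"
  show "\<exists>k\<in>I. u k = 1"
  proof (rule ccontr)
    assume "\<not> (\<exists>k\<in>I. u k = 1)"
    then obtain k1 k2 where "k1 \<in> I" "k2 \<in> I" "k1 \<noteq> k2" "0 < u k1" "0 < u k2"
      using two_positive_weights[OF \<open>finite I\<close> u] by blast
    with nn_integral_PiM_bernoulli_real_convex_less[OF assms] eq show False
      by simp
  qed
qed

lemma sum_column_eq_sum_pairs:
  fixes c :: "'n::finite \<Rightarrow> real" and f :: "'n \<times> 'r::finite \<Rightarrow> real"
  shows "(\<Sum>l\<in>UNIV. c l * f (l, j)) = (\<Sum>x\<in>UNIV. (if snd x = j then c (fst x) else 0) * f x)"
proof -
  have "(\<Sum>x\<in>UNIV. (if snd x = j then c (fst x) else 0) * f x) =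
      (\<Sum>l\<in>UNIV. \<Sum>j'\<in>UNIV. (if j' = j then c l else 0) * f (l, j'))"
    by (simp add: sum.cartesian_product UNIV_Times_UNIV[symmetric] case_prod_unfold del: UNIV_Times_UNIV)
  also have "\<dots> = (\<Sum>l\<in>UNIV. \<Sum>j'\<in>UNIV. if j' = j then c l * f (l, j) else 0)"
    by (intro sum.cong) auto
  finally show ?thesis by simp
qed

lemma pnorm_pow_mult_data:
  fixes A D0 :: "real^'n::finite^'n" and X G :: "'n \<times> 'r::finite \<Rightarrow> real"
  shows "pnorm_pow p (A ** (D0 ** mat_of X + mat_of G) :: real^'r^'n) =
    (\<Sum>i\<in>UNIV. \<Sum>j\<in>UNIV. \<bar>(\<Sum>l\<in>UNIV. (A ** D0) $ i $ l * X (l, j)) + (\<Sum>k\<in>UNIV. A $ i $ k * G (k, j))\<bar> ^ p)"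
proof -
  have "(A ** (D0 ** mat_of X + mat_of G) :: real^'r^'n) = (A ** D0) ** mat_of X + A ** mat_of G"
    by (simp add: matrix_add_ldistrib matrix_mul_assoc)
  then show ?thesis
    unfolding pnorm_pow_def by (simp add: matrix_matrix_mult_def mat_of_def)
qed

lemma nn_integral_latent_entry:
  fixes w v :: "'n::finite \<Rightarrow> real" and j :: "'r::finite"
  assumes "p > 0" and unit: "(\<Sum>k\<in>UNIV. (v k)\<^sup>2) = 1"
  shows "(\<integral>\<^sup>+\<omega>. ennreal (\<bar>(\<Sum>l\<in>UNIV. w l * (\<omega> (Inl (l, j)) * \<omega> (Inr (Inl (l, j))))) +
        (\<Sum>k\<in>UNIV. v k * (\<eta> * \<omega> (Inr (Inr (k, j)))))\<bar> ^ p) \<partial>PiM UNIV (latent \<theta>)) =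
    (\<integral>\<^sup>+b. ennreal (normal_abs_moment p ((\<Sum>l\<in>UNIV. (w l * b (Inl (l, j)))\<^sup>2) + \<eta>\<^sup>2))
      \<partial>(PiM (range Inl) (\<lambda>_. bernoulli_real \<theta>) :: ('n \<times> 'r + ('n \<times> 'r + 'n \<times> 'r) \<Rightarrow> real) measure))"
proof -
  define c where "c x = (if snd x = j then w (fst x) else 0)" for x
  define e where "e x = \<eta> * (if snd x = j then v (fst x) else 0)" for x
  have "(\<Sum>l\<in>UNIV. w l * (\<omega> (Inl (l, j)) * \<omega> (Inr (Inl (l, j))))) =
      (\<Sum>x\<in>UNIV. c x * \<omega> (Inl x) * \<omega> (Inr (Inl x)))"
    "(\<Sum>k\<in>UNIV. v k * (\<eta> * \<omega> (Inr (Inr (k, j))))) = (\<Sum>x\<in>UNIV. e x * \<omega> (Inr (Inr x)))"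
    for \<omega> :: "'n \<times> 'r + ('n \<times> 'r + 'n \<times> 'r) \<Rightarrow> real"
    using sum_column_eq_sum_pairs[of w "\<lambda>x. \<omega> (Inl x) * \<omega> (Inr (Inl x))" j]
      sum_column_eq_sum_pairs[of v "\<lambda>x. \<eta> * \<omega> (Inr (Inr x))" j]
    by (simp_all add: c_def e_def mult_ac)
  moreover have "(e x)\<^sup>2 = (if snd x = j then \<eta>\<^sup>2 * (v (fst x))\<^sup>2 else 0) * 1" for x
    by (simp add: e_def power_mult_distrib)
  then have "(\<Sum>x\<in>UNIV. (e x)\<^sup>2) = \<eta>\<^sup>2"
    using sum_column_eq_sum_pairs[of "\<lambda>k. \<eta>\<^sup>2 * (v k)\<^sup>2" "\<lambda>_. 1" j] unit
    by (simp add: sum_distrib_left[symmetric])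
  moreover have "(\<Sum>x\<in>UNIV. (c x * b (Inl x))\<^sup>2) = (\<Sum>l\<in>UNIV. (w l * b (Inl (l, j)))\<^sup>2)"
    for b :: "'n \<times> 'r + ('n \<times> 'r + 'n \<times> 'r) \<Rightarrow> real"
  proof -
    have "(c x * b (Inl x))\<^sup>2 = (if snd x = j then (w (fst x))\<^sup>2 else 0) * (b (Inl x))\<^sup>2" for x
      by (simp add: c_def power_mult_distrib)
    then have "(\<Sum>x\<in>UNIV. (c x * b (Inl x))\<^sup>2) =
        (\<Sum>x\<in>UNIV. (if snd x = j then (w (fst x))\<^sup>2 else 0) * (b (Inl x))\<^sup>2)"
      by simp
    also have "\<dots> = (\<Sum>l\<in>UNIV. (w l)\<^sup>2 * (b (Inl (l, j)))\<^sup>2)"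
      by (rule sum_column_eq_sum_pairs[symmetric])
    finally show ?thesis by (simp add: power_mult_distrib)
  qed
  ultimately show ?thesis
    by (simp add: nn_integral_latent_combination[OF \<open>p > 0\<close>])
qed

lemma objective_eq_latent:
  fixes A D0 :: "real^'n::finite^'n" and r :: "'r::finite itself"
  assumes "p > 0" and unit_rows: "\<And>i. (\<Sum>k\<in>UNIV. (A $ i $ k)\<^sup>2) = 1"
  shows "objective p \<theta> \<eta> D0 r A = enn2real (\<Sum>i\<in>UNIV. \<Sum>j\<in>(UNIV :: 'r set).
      \<integral>\<^sup>+b. ennreal (normal_abs_moment p ((\<Sum>l\<in>UNIV. ((A ** D0) $ i $ l * b (Inl (l, j)))\<^sup>2) + \<eta>\<^sup>2))
      \<partial>(PiM (range Inl) (\<lambda>_. bernoulli_real \<theta>) :: ('n \<times> 'r + ('n \<times> 'r + 'n \<times> 'r) \<Rightarrow> real) measure))"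
proof -
  let ?L = "PiM UNIV (latent \<theta>) :: ('n \<times> 'r + ('n \<times> 'r + 'n \<times> 'r) \<Rightarrow> real) measure"
  let ?S = "PiM (UNIV :: ('n \<times> 'r) set) (\<lambda>_. borel) :: ('n \<times> 'r \<Rightarrow> real) measure"
  define F where "F XG = (\<Sum>i\<in>UNIV. \<Sum>j\<in>(UNIV :: 'r set).
      \<bar>(\<Sum>l\<in>UNIV. (A ** D0) $ i $ l * fst XG (l, j)) + (\<Sum>k\<in>UNIV. A $ i $ k * snd XG (k, j))\<bar> ^ p)"
    for XG :: "('n \<times> 'r \<Rightarrow> real) \<times> ('n \<times> 'r \<Rightarrow> real)"
  define entry where "entry i j \<omega> =
      \<bar>(\<Sum>l\<in>UNIV. (A ** D0) $ i $ l * (\<omega> (Inl (l, j)) * \<omega> (Inr (Inl (l, j))))) +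
        (\<Sum>k\<in>UNIV. A $ i $ k * (\<eta> * \<omega> (Inr (Inr (k, j)))))\<bar> ^ p"
    for i j and \<omega> :: "'n \<times> 'r + ('n \<times> 'r + 'n \<times> 'r) \<Rightarrow> real"
  have F_measurable: "F \<in> borel_measurable (?S \<Otimes>\<^sub>M ?S)"
    unfolding F_def by measurable
  have entry_measurable [measurable]: "(\<lambda>\<omega>. ennreal (entry i j \<omega>)) \<in> borel_measurable ?L" for i j
    unfolding entry_def by measurable
  have "objective p \<theta> \<eta> D0 r A = (\<integral>XG. F XG \<partial>(PiM UNIV (\<lambda>_. BG \<theta>) \<Otimes>\<^sub>M PiM UNIV (\<lambda>_. gauss \<eta>)))"
    unfolding objective_def F_def by (simp add: pnorm_pow_mult_data)
  also have "\<dots> = (\<integral>\<omega>. F (latent_data \<eta> \<omega>) \<partial>?L)"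
    unfolding BG_gauss_eq_distr_latent by (rule integral_distr[OF measurable_latent_data F_measurable])
  also have "\<dots> = enn2real (\<integral>\<^sup>+\<omega>. ennreal (F (latent_data \<eta> \<omega>)) \<partial>?L)"
    by (rule integral_eq_nn_integral[OF measurable_compose[OF measurable_latent_data F_measurable]])
      (simp add: F_def sum_nonneg)
  also have "(\<integral>\<^sup>+\<omega>. ennreal (F (latent_data \<eta> \<omega>)) \<partial>?L) =
      (\<integral>\<^sup>+\<omega>. (\<Sum>i\<in>UNIV. \<Sum>j\<in>UNIV. ennreal (entry i j \<omega>)) \<partial>?L)"
    by (simp add: F_def entry_def latent_data_def sum_ennreal sum_nonneg)
  also have "\<dots> = (\<Sum>i\<in>UNIV. \<integral>\<^sup>+\<omega>. (\<Sum>j\<in>UNIV. ennreal (entry i j \<omega>)) \<partial>?L)"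
    by (rule nn_integral_sum) (intro borel_measurable_sum entry_measurable)
  also have "\<dots> = (\<Sum>i\<in>UNIV. \<Sum>j\<in>UNIV. \<integral>\<^sup>+\<omega>. ennreal (entry i j \<omega>) \<partial>?L)"
    by (intro sum.cong refl nn_integral_sum entry_measurable)
  finally show ?thesis
    unfolding entry_def nn_integral_latent_entry[OF \<open>p > 0\<close> unit_rows] .
qed

text \<open>For a unit row \<open>w\<close> the conditional variance \<open>\<Sum>\<^sub>l (w l)\<^sup>2 b\<^sub>l\<^sup>2 + \<eta>\<^sup>2\<close> is \<open>\<eta>\<^sup>2\<close> plus a convex
  combination of Bernoulli variables, so Jensen applies to \<open>t \<mapsto> (t + \<eta>\<^sup>2)\<^sup>p\<^sup>/\<^sup>2\<close>.\<close>

lemma nn_integral_row_moment_bound: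
  fixes w :: "'n::finite \<Rightarrow> real" and j :: "'r::finite" and \<eta> :: real
  assumes "p > 2" "0 < \<theta>" "\<theta> < 1" and unit: "(\<Sum>l\<in>UNIV. (w l)\<^sup>2) = 1"
  defines "V \<equiv> \<theta> * normal_abs_moment p (1 + \<eta>\<^sup>2) + (1 - \<theta>) * normal_abs_moment p (\<eta>\<^sup>2)"
  shows "(\<integral>\<^sup>+b. ennreal (normal_abs_moment p ((\<Sum>l\<in>UNIV. (w l * b (Inl (l, j)))\<^sup>2) + \<eta>\<^sup>2))
        \<partial>(PiM (range Inl) (\<lambda>_. bernoulli_real \<theta>) :: ('n \<times> 'r + ('n \<times> 'r + 'n \<times> 'r) \<Rightarrow> real) measure))
      \<le> ennreal V"
    and "(\<integral>\<^sup>+b. ennreal (normal_abs_moment p ((\<Sum>l\<in>UNIV. (w l * b (Inl (l, j)))\<^sup>2) + \<eta>\<^sup>2))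
        \<partial>(PiM (range Inl) (\<lambda>_. bernoulli_real \<theta>) :: ('n \<times> 'r + ('n \<times> 'r + 'n \<times> 'r) \<Rightarrow> real) measure))
      = ennreal V \<longleftrightarrow> (\<exists>l. (w l)\<^sup>2 = 1)"
proof -
  define u where "u k = (case k of Inl (l, j') \<Rightarrow> if j' = j then (w l)\<^sup>2 else 0 | Inr _ \<Rightarrow> 0)"
    for k :: "'n \<times> 'r + ('n \<times> 'r + 'n \<times> 'r)"
  have sum_range_Inl: "(\<Sum>k\<in>range Inl. u k * f k) = (\<Sum>l\<in>UNIV. (w l)\<^sup>2 * f (Inl (l, j)))" for f
  proof -
    have "(\<Sum>k\<in>range Inl. u k * f k) = (\<Sum>x\<in>UNIV. (if snd x = j then (w (fst x))\<^sup>2 else 0) * f (Inl x))"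
      by (simp add: sum.reindex u_def case_prod_unfold)
    also have "\<dots> = (\<Sum>l\<in>UNIV. (w l)\<^sup>2 * f (Inl (l, j)))"
      by (rule sum_column_eq_sum_pairs[symmetric])
    finally show ?thesis .
  qed
  have weights: "\<And>k. k \<in> range Inl \<Longrightarrow> 0 \<le> u k" "sum u (range Inl) = 1"
    using sum_range_Inl[of "\<lambda>_. 1"] unit by (auto simp: u_def)
  have unit_iff: "(\<exists>k\<in>range Inl. u k = 1) \<longleftrightarrow> (\<exists>l. (w l)\<^sup>2 = 1)"
    by (auto simp: u_def split: if_splits)
  have sum_eq: "(\<Sum>l\<in>UNIV. (w l * b (Inl (l, j)))\<^sup>2) = (\<Sum>k\<in>range Inl. u k * (b k)\<^sup>2)" for b
    by (simp add: sum_range_Inl power_mult_distrib)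
  have g: "\<And>t. 0 \<le> t \<Longrightarrow> 0 \<le> normal_abs_moment p (t + \<eta>\<^sup>2)"
    "(\<lambda>t. normal_abs_moment p (t + \<eta>\<^sup>2)) \<in> borel_measurable borel"
    "\<And>s. 0 < s \<Longrightarrow> s < 1 \<Longrightarrow> normal_abs_moment p (s + \<eta>\<^sup>2) <
      s * normal_abs_moment p (1 + \<eta>\<^sup>2) + (1 - s) * normal_abs_moment p (0 + \<eta>\<^sup>2)"
    using normal_abs_moment_strict_chord[of "\<eta>\<^sup>2" p] std_normal_abs_moment_pos[of p] \<open>p > 2\<close>
    by (simp_all add: normal_abs_moment_def)
  have "finite (range (Inl :: 'n \<times> 'r \<Rightarrow> 'n \<times> 'r + ('n \<times> 'r + 'n \<times> 'r)))" "0 \<le> \<theta>" "\<theta> \<le> 1"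
    using \<open>0 < \<theta>\<close> \<open>\<theta> < 1\<close> by simp_all
  note le = nn_integral_PiM_bernoulli_real_convex_le[OF this weights g]
    and eq_iff = nn_integral_PiM_bernoulli_real_convex_eq_iff[OF this(1) \<open>0 < \<theta>\<close> \<open>\<theta> < 1\<close> weights g]
  have V: "V = \<theta> * normal_abs_moment p (1 + \<eta>\<^sup>2) + (1 - \<theta>) * normal_abs_moment p (0 + \<eta>\<^sup>2)"
    by (simp add: V_def)
  show "(\<integral>\<^sup>+b. ennreal (normal_abs_moment p ((\<Sum>l\<in>UNIV. (w l * b (Inl (l, j)))\<^sup>2) + \<eta>\<^sup>2))
        \<partial>(PiM (range Inl) (\<lambda>_. bernoulli_real \<theta>) :: ('n \<times> 'r + ('n \<times> 'r + 'n \<times> 'r) \<Rightarrow> real) measure))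
      \<le> ennreal V"
    unfolding sum_eq V by (rule le)
  show "(\<integral>\<^sup>+b. ennreal (normal_abs_moment p ((\<Sum>l\<in>UNIV. (w l * b (Inl (l, j)))\<^sup>2) + \<eta>\<^sup>2))
        \<partial>(PiM (range Inl) (\<lambda>_. bernoulli_real \<theta>) :: ('n \<times> 'r + ('n \<times> 'r + 'n \<times> 'r) \<Rightarrow> real) measure))
      = ennreal V \<longleftrightarrow> (\<exists>l. (w l)\<^sup>2 = 1)"
    unfolding sum_eq V using eq_iff unit_iff by (rule trans)
qed

section \<open>Orthogonal and signed permutation matrices\<close>

lemma orthogonal_matrix_rows:
  fixes Q :: "real^'n::finite^'n"
  assumes "orthogonal_matrix Q"
  shows "(\<Sum>k\<in>UNIV. (Q $ i $ k)\<^sup>2) = 1"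
    and "i \<noteq> i' \<Longrightarrow> (\<Sum>k\<in>UNIV. Q $ i $ k * Q $ i' $ k) = 0"
proof -
  have "(Q ** transpose Q) $ i $ i' = (if i = i' then 1 else 0)" for i i'
    using assms by (simp add: orthogonal_matrix_def mat_def)
  then show "(\<Sum>k\<in>UNIV. (Q $ i $ k)\<^sup>2) = 1" "i \<noteq> i' \<Longrightarrow> (\<Sum>k\<in>UNIV. Q $ i $ k * Q $ i' $ k) = 0"
    by (auto simp: matrix_matrix_mult_def transpose_def power2_eq_square dest: spec[of _ i])
qed

lemma orthogonal_matrix_row_unit_entry:
  fixes W :: "real^'n::finite^'n"
  assumes "orthogonal_matrix W" "(W $ i $ l)\<^sup>2 = 1" "l' \<noteq> l"
  shows "W $ i $ l' = 0"
proof -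
  have "(\<Sum>k\<in>UNIV. (W $ i $ k)\<^sup>2) = (W $ i $ l)\<^sup>2 + (\<Sum>k\<in>UNIV - {l}. (W $ i $ k)\<^sup>2)"
    by (subst sum.remove[of UNIV l]) auto
  then have "(\<Sum>k\<in>UNIV - {l}. (W $ i $ k)\<^sup>2) = 0"
    using orthogonal_matrix_rows(1)[OF assms(1)] assms(2) by simp
  then show ?thesis using assms(3) by (subst (asm) sum_nonneg_eq_0_iff) auto
qed

lemma signed_perm_matrix_orthogonal:
  fixes P :: "real^'n::finite^'n"
  assumes "signed_perm_matrix P"
  shows "orthogonal_matrix P"
proof -
  obtain \<sigma> s where \<sigma>: "\<sigma> permutes (UNIV :: 'n set)" and s: "\<forall>i. s i = 1 \<or> s i = -1"
    and P: "P = (\<chi> i j. if j = \<sigma> i then s i else 0)"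
    using assms unfolding signed_perm_matrix_def by blast
  have s_sq: "s i * s i = 1" for i using s by (metis mult_1 mult_minus1 minus_minus)
  have "(transpose P ** P) $ j $ j' = (if j = j' then 1 else 0)" for j j'
  proof -
    have "(transpose P ** P) $ j $ j' =
        (\<Sum>i\<in>UNIV. (if j = \<sigma> i then s i else 0) * (if j' = \<sigma> i then s i else 0))"
      by (simp add: matrix_matrix_mult_def transpose_def P)
    also have "\<dots> = (\<Sum>i\<in>UNIV. if i = inv \<sigma> j then (if j' = j then 1 else 0) else 0)"
    proof (rule sum.cong[OF refl])
      fix i
      have "j = \<sigma> i \<longleftrightarrow> i = inv \<sigma> j" using permutes_inv_eq[OF \<sigma>, of j i] by auto
      then show "(if j = \<sigma> i then s i else 0) * (if j' = \<sigma> i then s i else 0) =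
          (if i = inv \<sigma> j then (if j' = j then 1 else 0) else 0)"
        using s_sq[of i] by auto
    qed
    finally show ?thesis by simp
  qed
  then have "transpose P ** P = mat 1" by (simp add: vec_eq_iff mat_def)
  then show ?thesis by (simp add: orthogonal_matrix)
qed

lemma signed_perm_matrix_transpose_iff:
  fixes W :: "real^'n::finite^'n"
  assumes "orthogonal_matrix W"
  shows "signed_perm_matrix (transpose W) \<longleftrightarrow> (\<forall>i. \<exists>l. (W $ i $ l)\<^sup>2 = 1)"
proof
  assume "signed_perm_matrix (transpose W)"
  then obtain \<sigma> s where \<sigma>: "\<sigma> permutes (UNIV :: 'n set)" and s: "\<forall>i. s i = 1 \<or> s i = -1"
    and W: "transpose W = (\<chi> i j. if j = \<sigma> i then s i else 0)"
    unfolding signed_perm_matrix_def by blast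
  have "W $ i $ inv \<sigma> i = s (inv \<sigma> i)" for i
    using arg_cong[OF W, of "\<lambda>M. M $ inv \<sigma> i $ i"] by (simp add: transpose_def permutes_inverses[OF \<sigma>])
  moreover have "(s k)\<^sup>2 = 1" for k
    using s[rule_format, of k] by auto
  ultimately have "(W $ i $ inv \<sigma> i)\<^sup>2 = 1" for i
    by simp
  then show "\<forall>i. \<exists>l. (W $ i $ l)\<^sup>2 = 1"
    by blast
next
  assume "\<forall>i. \<exists>l. (W $ i $ l)\<^sup>2 = 1"
  then obtain \<sigma> where \<sigma>: "\<And>i. (W $ i $ \<sigma> i)\<^sup>2 = 1" by metis
  define s where "s i = W $ i $ \<sigma> i" for i
  have s: "s i = 1 \<or> s i = -1" for i using \<sigma>[of i] by (simp add: s_def power2_eq_1_iff)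
  have W: "W $ i $ l = (if l = \<sigma> i then s i else 0)" for i l
    using orthogonal_matrix_row_unit_entry[OF assms \<sigma>] by (auto simp: s_def)
  have "inj \<sigma>"
  proof (rule injI, rule ccontr)
    fix i i' assume "\<sigma> i = \<sigma> i'" "i \<noteq> i'"
    then have "s i * s i' = 0"
      using orthogonal_matrix_rows(2)[OF assms \<open>i \<noteq> i'\<close>] by (simp add: W if_distrib cong: if_cong)
    then show False using s[of i] s[of i'] by auto
  qed
  then have "bij \<sigma>" using finite_UNIV_inj_surj[of \<sigma>] by (simp add: bij_def)
  then have perm: "\<sigma> permutes UNIV" by (rule bij_imp_permutes) simp
  have "W $ j $ i = (if j = inv \<sigma> i then s (inv \<sigma> i) else 0)" for i j
    using permutes_inv_eq[OF perm, of i j] by (auto simp: W)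
  then have "transpose W = (\<chi> i j. if j = inv \<sigma> i then (s \<circ> inv \<sigma>) i else 0)"
    by (simp add: vec_eq_iff transpose_def)
  then show "signed_perm_matrix (transpose W)"
    unfolding signed_perm_matrix_def
    by (intro exI[of _ "inv \<sigma>"] exI[of _ "s \<circ> inv \<sigma>"] conjI permutes_inv[OF perm]) (simp_all add: s)
qed

lemma transpose_eq_mult_signed_perm_iff:
  fixes A D0 :: "real^'n::finite^'n"
  assumes "orthogonal_matrix D0"
  shows "(orthogonal_matrix A \<and> signed_perm_matrix (transpose (A ** D0))) \<longleftrightarrow>
    (\<exists>P. signed_perm_matrix P \<and> transpose A = D0 ** P)"
proof -
  have D0: "transpose D0 ** D0 = mat 1" "D0 ** transpose D0 = mat 1"
    using assms by (simp_all add: orthogonal_matrix_def)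
  show ?thesis
  proof
    assume "orthogonal_matrix A \<and> signed_perm_matrix (transpose (A ** D0))"
    moreover have "D0 ** transpose (A ** D0) = transpose A"
      by (simp only: matrix_transpose_mul matrix_mul_assoc D0(2) matrix_mul_lid)
    ultimately show "\<exists>P. signed_perm_matrix P \<and> transpose A = D0 ** P"
      by metis
  next
    assume "\<exists>P. signed_perm_matrix P \<and> transpose A = D0 ** P"
    then obtain P where P: "signed_perm_matrix P" and A: "transpose A = D0 ** P" by blast
    have "orthogonal_matrix (transpose A)"
      unfolding A by (intro orthogonal_matrix_mul assms signed_perm_matrix_orthogonal P)
    moreover have "A = transpose P ** transpose D0"
      using arg_cong[OF A, of transpose] by (simp add: matrix_transpose_mul)
    then have "A ** D0 = transpose P"
      by (simp only: matrix_mul_assoc[symmetric] D0(1) matrix_mul_rid)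
    ultimately show "orthogonal_matrix A \<and> signed_perm_matrix (transpose (A ** D0))"
      using P by simp
  qed
qed

lemma signed_perm_matrix_mat_1: "signed_perm_matrix (mat 1 :: real^'n::finite^'n)"
proof -
  have "\<exists>l. ((mat 1 :: real^'n^'n) $ i $ l)\<^sup>2 = 1" for i
    by (intro exI[of _ i]) (simp add: mat_def)
  then have "signed_perm_matrix (transpose (mat 1 :: real^'n^'n))"
    using signed_perm_matrix_transpose_iff[OF orthogonal_matrix_id, THEN iffD2] by blast
  then show ?thesis by simp
qed

lemma objective_le_and_eq_iff:
  fixes A D0 :: "real^'n::finite^'n" and r :: "'r::finite itself" and \<eta> :: real
  assumes "p > 2" "0 < \<theta>" "\<theta> < 1" "orthogonal_matrix D0" "orthogonal_matrix A"
  defines "C \<equiv> real CARD('n) * real CARD('r) *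
    (\<theta> * normal_abs_moment p (1 + \<eta>\<^sup>2) + (1 - \<theta>) * normal_abs_moment p (\<eta>\<^sup>2))"
  shows "objective p \<theta> \<eta> D0 r A \<le> C"
    and "objective p \<theta> \<eta> D0 r A = C \<longleftrightarrow> signed_perm_matrix (transpose (A ** D0))"
proof -
  define V where "V = \<theta> * normal_abs_moment p (1 + \<eta>\<^sup>2) + (1 - \<theta>) * normal_abs_moment p (\<eta>\<^sup>2)"
  define W where "W = A ** D0"
  have "orthogonal_matrix W"
    unfolding W_def by (rule orthogonal_matrix_mul[OF assms(5,4)])
  define I where "I i j = (\<integral>\<^sup>+b. ennreal (normal_abs_moment p ((\<Sum>l\<in>UNIV. (W $ i $ l * b (Inl (l, j)))\<^sup>2) + \<eta>\<^sup>2))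
      \<partial>(PiM (range Inl) (\<lambda>_. bernoulli_real \<theta>) :: ('n \<times> 'r + ('n \<times> 'r + 'n \<times> 'r) \<Rightarrow> real) measure))"
    for i and j :: 'r
  have row_bound: "I i j \<le> ennreal V" "I i j = ennreal V \<longleftrightarrow> (\<exists>l. (W $ i $ l)\<^sup>2 = 1)" for i j
    unfolding I_def V_def
    by (rule nn_integral_row_moment_bound[OF assms(1-3) orthogonal_matrix_rows(1)[OF \<open>orthogonal_matrix W\<close>]])+
  have "0 \<le> V"
    using \<open>0 < \<theta>\<close> \<open>\<theta> < 1\<close> std_normal_abs_moment_pos[of p] by (simp add: V_def normal_abs_moment_def)
  define \<psi> where "\<psi> i j = enn2real (I i j)" for i j
  have I_\<psi>: "I i j = ennreal (\<psi> i j)" for i j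
    unfolding \<psi>_def using neq_top_trans[OF ennreal_neq_top row_bound(1)] by (simp add: less_top)
  have \<psi>_nonneg: "0 \<le> \<psi> i j" for i j
    by (simp add: \<psi>_def)
  have \<psi>_le: "\<psi> i j \<le> V" and \<psi>_eq: "\<psi> i j = V \<longleftrightarrow> (\<exists>l. (W $ i $ l)\<^sup>2 = 1)" for i j
    using row_bound[of i j] \<open>0 \<le> V\<close> \<psi>_nonneg[of i j] by (simp_all add: I_\<psi>)
  have "objective p \<theta> \<eta> D0 r A = enn2real (\<Sum>i\<in>UNIV. \<Sum>j\<in>UNIV. I i j)"
    unfolding I_def W_def using \<open>p > 2\<close>
    by (intro objective_eq_latent orthogonal_matrix_rows(1)[OF assms(5)]) simp
  also have "\<dots> = (\<Sum>i\<in>UNIV. \<Sum>j\<in>UNIV. \<psi> i j)"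
    by (simp add: I_\<psi> \<psi>_nonneg sum_nonneg)
  finally have objective: "objective p \<theta> \<eta> D0 r A = (\<Sum>i\<in>UNIV. \<Sum>j\<in>(UNIV :: 'r set). \<psi> i j)" .
  have C: "C = (\<Sum>i\<in>(UNIV :: 'n set). \<Sum>j\<in>(UNIV :: 'r set). V)"
    by (simp add: C_def V_def)
  show "objective p \<theta> \<eta> D0 r A \<le> C"
    unfolding objective C by (intro sum_mono \<psi>_le)
  have "objective p \<theta> \<eta> D0 r A = C \<longleftrightarrow> (\<Sum>i\<in>UNIV. \<Sum>j\<in>(UNIV :: 'r set). V - \<psi> i j) = 0"
    unfolding objective C by (auto simp: sum_subtractf)
  also have "\<dots> \<longleftrightarrow> (\<forall>i j. \<psi> i j = V)"
    using \<psi>_le by (auto simp: sum_nonneg_eq_0_iff sum_nonneg)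
  also have "\<dots> \<longleftrightarrow> (\<forall>i. \<exists>l. (W $ i $ l)\<^sup>2 = 1)"
    by (simp add: \<psi>_eq)
  finally show "objective p \<theta> \<eta> D0 r A = C \<longleftrightarrow> signed_perm_matrix (transpose (A ** D0))"
    using signed_perm_matrix_transpose_iff[OF \<open>orthogonal_matrix W\<close>] unfolding W_def by simp
qed

lemma maximizer_iff_attains_upper_bound:
  fixes f :: "'a \<Rightarrow> 'b::order"
  assumes "\<And>x. P x \<Longrightarrow> f x \<le> C" and "P z" and "f z = C"
  shows "(P a \<and> (\<forall>x. P x \<longrightarrow> f x \<le> f a)) \<longleftrightarrow> (P a \<and> f a = C)"
  using assms by (blast intro: antisym)

theorem mainTheorem9:
  fixes p :: nat and \<theta> \<eta> :: real and D0 :: "real^'n::finite^'n"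
    and r :: "'r::finite itself"
  assumes "p > 2" and "0 < \<theta>" and "\<theta> < 1" and "\<eta> \<ge> 0"
    and "orthogonal_matrix D0"
  shows "\<forall>A :: real^'n^'n.
           (orthogonal_matrix A \<and>
              (\<forall>B. orthogonal_matrix B \<longrightarrow> objective p \<theta> \<eta> D0 r B \<le> objective p \<theta> \<eta> D0 r A))
           \<longleftrightarrow> (\<exists>P. signed_perm_matrix P \<and> transpose A = D0 ** P)"
proof
  fix A :: "real^'n^'n"
  define C where "C = real CARD('n) * real CARD('r) *
    (\<theta> * normal_abs_moment p (1 + \<eta>\<^sup>2) + (1 - \<theta>) * normal_abs_moment p (\<eta>\<^sup>2))"
  note bound = objective_le_and_eq_iff[OF assms(1-3,5), where \<eta> = \<eta> and r = r, folded C_def]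
  have "transpose D0 ** D0 = mat 1"
    using assms(5) by (simp add: orthogonal_matrix_def)
  then have "objective p \<theta> \<eta> D0 r (transpose D0) = C"
    using bound(2)[of "transpose D0"] assms(5) signed_perm_matrix_mat_1 by simp
  then have "(orthogonal_matrix A \<and> (\<forall>B. orthogonal_matrix B \<longrightarrow>
      objective p \<theta> \<eta> D0 r B \<le> objective p \<theta> \<eta> D0 r A)) \<longleftrightarrow>
      orthogonal_matrix A \<and> objective p \<theta> \<eta> D0 r A = C"
    using maximizer_iff_attains_upper_bound[where P = orthogonal_matrix and f = "objective p \<theta> \<eta> D0 r"
        and z = "transpose D0" and a = A, OF bound(1)] assms(5)
    by simp
  also have "\<dots> \<longleftrightarrow> orthogonal_matrix A \<and> signed_perm_matrix (transpose (A ** D0))"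
    using bound(2) by blast
  also have "\<dots> \<longleftrightarrow> (\<exists>P. signed_perm_matrix P \<and> transpose A = D0 ** P)"
    by (rule transpose_eq_mult_signed_perm_iff[OF assms(5)])
  finally show "(orthogonal_matrix A \<and> (\<forall>B. orthogonal_matrix B \<longrightarrow>
      objective p \<theta> \<eta> D0 r B \<le> objective p \<theta> \<eta> D0 r A)) \<longleftrightarrow>
      (\<exists>P. signed_perm_matrix P \<and> transpose A = D0 ** P)" .
qed

end
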